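(* For every $n\ge 1$ and every $i\in\{1,\dots,n-1\}$, $\mathrm{cap}_{\{i\},n}\circ\mathrm{j}_n=0=\mathrm{j}_n\circ\mathrm{cup}_{\{i\},n}$ in $\mathcal{TL}_0(\Bbbk)$. Equivalently, $\mathrm{j}_n$ is annihilated under both pre- and post-composition by the ideal spanned by Temperley–Lieb diagrams with fewer than $n$ through-strands.
   Context: $\Bbbk$ is a field. $\mathcal{TL}_0(\Bbbk)$ is the strict $\Bbbk$-linear monoidal category with objects $\mathbf 0,\mathbf 1,\dots$, $\mathbf m\otimes\mathbf n=\mathbf{m+n}$, generated by $\mathrm{cup}:\mathbf 0\to\mathbf 2$ and $\mathrm{cap}:\mathbf 2\to\mathbf 0$ subject to $(\mathrm{id}_{\mathbf 1}\otimes\mathrm{cap})\circ(\mathrm{cup}\otimes\mathrm{id}_{\mathbf 1})=0=(\mathrm{cap}\otimes\mathrm{id}_{\mathbf 1})\circ(\mathrm{id}_{\mathbf 1}\otimes\mathrm{cup})$ and $\mathrm{cap}\circ\mathrm{cup}=\mathrm{id}_{\mathbf 0}$. A Temperley–Lieb diagram is a nonzero morphism built from cup, cap and identities by $\otimes$ and $\circ$; its through-strands are the strands joining bottom to top. A subset $I\subseteq\{1,\dots,n\}$ is apt if $n\notin I$ and no two elements of $I$ are consecutive; $\mathrm{cap}_{I,n}:\mathbf n\to\mathbf{n-2|I|}$ has caps joining strands $i,i+1$ for $i\in I$ and through-strands elsewhere, $\mathrm{cup}_{I,n}$ is its vertical reflection (so $\mathrm{cap}_{\{i\},n}=\mathrm{id}_{\mathbf{i-1}}\otimes\mathrm{cap}\otimes\mathrm{id}_{\mathbf{n-i-1}}$,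 $\mathrm{cup}_{\{i\},n}=\mathrm{id}_{\mathbf{i-1}}\otimes\mathrm{cup}\otimes\mathrm{id}_{\mathbf{n-i-1}}$), and $\mathrm{j}_n=\sum_{I\text{ apt}}(-1)^{|I|}\mathrm{cup}_{I,n}\circ\mathrm{cap}_{I,n}$. *)

theory Defs
  imports Main
begin

text \<open>Formal expressions built from identities, cup, cap by composition and tensor
  product. TComp f g denotes f \<circ> g (g applied first).\<close>

datatype tl_expr = TId nat | TCup | TCap | TComp tl_expr tl_expr | TTens tl_expr tl_expr

inductive tl_wt :: "tl_expr \<Rightarrow> nat \<Rightarrow> nat \<Rightarrow> bool" where
  "tl_wt (TId n) n n"
| "tl_wt TCup 0 2"
| "tl_wt TCap 2 0"
| "tl_wt g a b \<Longrightarrow> tl_wt f b c \<Longrightarrow> tl_wt (TComp f g) a c"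
| "tl_wt f a b \<Longrightarrow> tl_wt g c d \<Longrightarrow> tl_wt (TTens f g) (a + c) (b + d)"

text \<open>Formal linear combinations of expressions (coefficients in a field).\<close>

definition tl_single :: "tl_expr \<Rightarrow> tl_expr \<Rightarrow> 'k::field" where
  "tl_single e = (\<lambda>x. if x = e then 1 else 0)"

definition tl_lcomp :: "(tl_expr \<Rightarrow> 'k::field) \<Rightarrow> (tl_expr \<Rightarrow> 'k) \<Rightarrow> tl_expr \<Rightarrow> 'k" where
  "tl_lcomp u v = (\<lambda>e. case e of TComp a b \<Rightarrow> u a * v b | _ \<Rightarrow> 0)"

definition tl_ltens :: "(tl_expr \<Rightarrow> 'k::field) \<Rightarrow> (tl_expr \<Rightarrow> 'k) \<Rightarrow> tl_expr \<Rightarrow> 'k" where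
  "tl_ltens u v = (\<lambda>e. case e of TTens a b \<Rightarrow> u a * v b | _ \<Rightarrow> 0)"

text \<open>tl_null a b v: the linear combination v of expressions a \<rightarrow> b lies in the
  two-sided tensor ideal generated by the axioms of a strict monoidal category and the
  defining relations of TL_0; i.e. v represents the zero morphism a \<rightarrow> b of TL_0(k).\<close>

inductive tl_null :: "nat \<Rightarrow> nat \<Rightarrow> (tl_expr \<Rightarrow> 'k::field) \<Rightarrow> bool" where
  zero: "tl_null a b (\<lambda>_. 0)"
| add: "tl_null a b u \<Longrightarrow> tl_null a b v \<Longrightarrow> tl_null a b (\<lambda>e. u e + v e)"
| smult: "tl_null a b v \<Longrightarrow> tl_null a b (\<lambda>e. c * v e)"
| comp_assoc: "tl_wt h a b \<Longrightarrow> tl_wt g b c \<Longrightarrow> tl_wt f c d \<Longrightarrow>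
    tl_null a d (\<lambda>x. tl_single (TComp (TComp f g) h) x - tl_single (TComp f (TComp g h)) x)"
| id_left: "tl_wt f a b \<Longrightarrow> tl_null a b (\<lambda>x. tl_single (TComp (TId b) f) x - tl_single f x)"
| id_right: "tl_wt f a b \<Longrightarrow> tl_null a b (\<lambda>x. tl_single (TComp f (TId a)) x - tl_single f x)"
| tens_assoc: "tl_wt f a b \<Longrightarrow> tl_wt g c d \<Longrightarrow> tl_wt h e k \<Longrightarrow>
    tl_null (a + c + e) (b + d + k)
      (\<lambda>x. tl_single (TTens (TTens f g) h) x - tl_single (TTens f (TTens g h)) x)"
| tens_unit_left: "tl_wt f a b \<Longrightarrow> tl_null a b (\<lambda>x. tl_single (TTens (TId 0) f) x - tl_single f x)"
| tens_unit_right: "tl_wt f a b \<Longrightarrow> tl_null a b (\<lambda>x. tl_single (TTens f (TId 0)) x - tl_single f x)"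
| tens_id: "tl_null (m + n) (m + n) (\<lambda>x. tl_single (TTens (TId m) (TId n)) x - tl_single (TId (m + n)) x)"
| interchange: "tl_wt g a b \<Longrightarrow> tl_wt f b c \<Longrightarrow> tl_wt k d e \<Longrightarrow> tl_wt h e l \<Longrightarrow>
    tl_null (a + d) (c + l)
      (\<lambda>x. tl_single (TComp (TTens f h) (TTens g k)) x - tl_single (TTens (TComp f g) (TComp h k)) x)"
| zigzag1: "tl_null 1 1 (tl_single (TComp (TTens (TId 1) TCap) (TTens TCup (TId 1))))"
| zigzag2: "tl_null 1 1 (tl_single (TComp (TTens TCap (TId 1)) (TTens (TId 1) TCup)))"
| circle: "tl_null 0 0 (\<lambda>x. tl_single (TComp TCap TCup) x - tl_single (TId 0) x)"
| comp_left: "tl_null a b v \<Longrightarrow> tl_wt f b c \<Longrightarrow> tl_null a c (tl_lcomp (tl_single f) v)"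
| comp_right: "tl_null a b v \<Longrightarrow> tl_wt g c a \<Longrightarrow> tl_null c b (tl_lcomp v (tl_single g))"
| tens_left: "tl_null a b v \<Longrightarrow> tl_wt f c d \<Longrightarrow> tl_null (c + a) (d + b) (tl_ltens (tl_single f) v)"
| tens_right: "tl_null a b v \<Longrightarrow> tl_wt f c d \<Longrightarrow> tl_null (a + c) (b + d) (tl_ltens v (tl_single f))"

text \<open>capx I k r: the tensor product over strands k, k+1, ... (r strands remaining) where a
  cap joins strands i, i+1 for i \<in> I and identities elsewhere.\<close>

fun capx :: "nat set \<Rightarrow> nat \<Rightarrow> nat \<Rightarrow> tl_expr" where
  "capx I k 0 = TId 0"
| "capx I k (Suc 0) = TTens (TId 1) (TId 0)"
| "capx I k (Suc (Suc r)) =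
     (if k \<in> I then TTens TCap (capx I (k + 2) r)
      else TTens (TId 1) (capx I (k + 1) (Suc r)))"

fun cupx :: "nat set \<Rightarrow> nat \<Rightarrow> nat \<Rightarrow> tl_expr" where
  "cupx I k 0 = TId 0"
| "cupx I k (Suc 0) = TTens (TId 1) (TId 0)"
| "cupx I k (Suc (Suc r)) =
     (if k \<in> I then TTens TCup (cupx I (k + 2) r)
      else TTens (TId 1) (cupx I (k + 1) (Suc r)))"

definition cap_I :: "nat set \<Rightarrow> nat \<Rightarrow> tl_expr" where
  "cap_I I n = capx I 1 n"

definition cup_I :: "nat set \<Rightarrow> nat \<Rightarrow> tl_expr" where
  "cup_I I n = cupx I 1 n"

definition apt :: "nat \<Rightarrow> nat set set" where
  "apt n = {I. I \<subseteq> {1..n} \<and> n \<notin> I \<and> (\<forall>i\<in>I. Suc i \<notin> I)}"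

definition jn :: "nat \<Rightarrow> tl_expr \<Rightarrow> 'k::field" where
  "jn n = (\<lambda>e. \<Sum>I\<in>apt n. if e = TComp (cup_I I n) (cap_I I n) then (-1) ^ card I else 0)"

end

theory Submission
  imports Defs
begin

text \<open>
  Composing \<open>j\<^sub>n\<close> with the cap at strand \<open>i\<close> gives the signed sum of the diagrams
  \<open>cap\<^sub>i \<circ> cup\<^sub>I \<circ> cap\<^sub>I\<close> over all apt \<open>I\<close>. If \<open>i \<notin> I\<close> but \<open>i - 1 \<in> I\<close> or \<open>i + 1 \<in> I\<close>, the cap at \<open>i\<close>
  meets a neighbouring cup of \<open>cup\<^sub>I\<close> in a zigzag and the diagram is zero. The other apt sets
  pair up as \<open>I\<close> and \<open>insert i I\<close> with \<open>i - 1, i, i + 1 \<notin> I\<close>, and the two diagrams of a pair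
  are equal: for \<open>insert i I\<close> the cap at \<open>i\<close> closes a circle, which is 1, while for \<open>I\<close> it
  slides through two through-strands of \<open>cup\<^sub>I\<close> and adds the cap at \<open>i\<close> to \<open>cap\<^sub>I\<close>. Their signs
  are opposite, so each pair cancels. The identity for \<open>cup\<^sub>i\<close> follows by turning every diagram
  upside down, which preserves the relations and fixes \<open>j\<^sub>n\<close>.
\<close>

fun tl_dom :: "tl_expr \<Rightarrow> nat" where
  "tl_dom (TId n) = n"
| "tl_dom TCup = 0"
| "tl_dom TCap = 2"
| "tl_dom (TComp f g) = tl_dom g"
| "tl_dom (TTens f g) = tl_dom f + tl_dom g"

fun tl_cod :: "tl_expr \<Rightarrow> nat" where
  "tl_cod (TId n) = n"
| "tl_cod TCup = 2"
| "tl_cod TCap = 0"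
| "tl_cod (TComp f g) = tl_cod f"
| "tl_cod (TTens f g) = tl_cod f + tl_cod g"

lemma tl_wt_dom_cod: "tl_wt e a b \<Longrightarrow> tl_dom e = a \<and> tl_cod e = b"
  by (induction rule: tl_wt.induct) auto

definition tl_wf :: "tl_expr \<Rightarrow> bool" where
  "tl_wf e \<longleftrightarrow> tl_wt e (tl_dom e) (tl_cod e)"

lemma tl_wfD: "tl_wf e \<Longrightarrow> tl_wt e (tl_dom e) (tl_cod e)"
  by (simp add: tl_wf_def)

inductive_cases tl_wt_TCompE: "tl_wt (TComp f g) a c"
inductive_cases tl_wt_TTensE: "tl_wt (TTens f g) a c"

lemma tl_wf_simps [simp]:
  "tl_wf (TId n)" "tl_wf TCup" "tl_wf TCap"
  "tl_wf (TComp f g) \<longleftrightarrow> tl_wf f \<and> tl_wf g \<and> tl_dom f = tl_cod g"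
  "tl_wf (TTens f g) \<longleftrightarrow> tl_wf f \<and> tl_wf g"
  unfolding tl_wf_def
  by (auto intro: tl_wt.intros elim!: tl_wt_TCompE tl_wt_TTensE dest: tl_wt_dom_cod)

lemma tl_null_diff_swap:
  "tl_null a b (\<lambda>x. u x - v x) \<Longrightarrow> tl_null a b (\<lambda>x. (v x - u x :: 'k::field))"
  using tl_null.smult[where c = "-1"] by fastforce

lemma tl_null_diff_trans:
  assumes "tl_null a b (\<lambda>x. u x - v x)" and "tl_null a b (\<lambda>x. v x - w x)"
  shows "tl_null a b (\<lambda>x. (u x - w x :: 'k::field))"
  using tl_null.add[OF assms] by simp

lemma tl_null_diff_null:
  assumes "tl_null a b (\<lambda>x. u x - v x)" and "tl_null a b v"
  shows "tl_null a b (u :: _ \<Rightarrow> 'k::field)"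
  using tl_null.add[OF assms] by simp

lemma tl_null_sum:
  "finite S \<Longrightarrow> (\<And>s. s \<in> S \<Longrightarrow> tl_null a b (f s)) \<Longrightarrow>
    tl_null a b (\<lambda>x. \<Sum>s\<in>S. (f s x :: 'k::field))"
  by (induction S rule: finite_induct) (auto intro: tl_null.zero tl_null.add)

lemma tl_lcomp_diff_left:
  "tl_lcomp (\<lambda>x. u x - v x) w = (\<lambda>x. tl_lcomp u w x - (tl_lcomp v w x :: 'k::field))"
  by (auto simp: fun_eq_iff tl_lcomp_def left_diff_distrib split: tl_expr.split)

lemma tl_lcomp_diff_right:
  "tl_lcomp w (\<lambda>x. u x - v x) = (\<lambda>x. tl_lcomp w u x - (tl_lcomp w v x :: 'k::field))"
  by (auto simp: fun_eq_iff tl_lcomp_def right_diff_distrib split: tl_expr.split)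

lemma tl_ltens_diff_left:
  "tl_ltens (\<lambda>x. u x - v x) w = (\<lambda>x. tl_ltens u w x - (tl_ltens v w x :: 'k::field))"
  by (auto simp: fun_eq_iff tl_ltens_def left_diff_distrib split: tl_expr.split)

lemma tl_ltens_diff_right:
  "tl_ltens w (\<lambda>x. u x - v x) = (\<lambda>x. tl_ltens w u x - (tl_ltens w v x :: 'k::field))"
  by (auto simp: fun_eq_iff tl_ltens_def right_diff_distrib split: tl_expr.split)

lemma tl_lcomp_single:
  "tl_lcomp (tl_single f) (tl_single g) = (tl_single (TComp f g) :: _ \<Rightarrow> 'k::field)"
  by (auto simp: fun_eq_iff tl_lcomp_def tl_single_def split: tl_expr.split)

lemma tl_ltens_single:
  "tl_ltens (tl_single f) (tl_single g) = (tl_single (TTens f g) :: _ \<Rightarrow> 'k::field)"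
  by (auto simp: fun_eq_iff tl_ltens_def tl_single_def split: tl_expr.split)

lemmas tl_linear_simps =
  tl_lcomp_diff_left tl_lcomp_diff_right tl_ltens_diff_left tl_ltens_diff_right
  tl_lcomp_single tl_ltens_single

definition tl_eqv :: "'k::field itself \<Rightarrow> tl_expr \<Rightarrow> tl_expr \<Rightarrow> bool" where
  "tl_eqv K e e' \<longleftrightarrow> tl_wf e \<and> tl_wf e' \<and> tl_dom e = tl_dom e' \<and> tl_cod e = tl_cod e' \<and>
     tl_null (tl_dom e) (tl_cod e) (\<lambda>x. (tl_single e x :: 'k) - tl_single e' x)"

definition tl_zero :: "'k::field itself \<Rightarrow> tl_expr \<Rightarrow> bool" where
  "tl_zero K e \<longleftrightarrow> tl_wf e \<and> tl_null (tl_dom e) (tl_cod e) (tl_single e :: _ \<Rightarrow> 'k)"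

lemma tl_eqvD: "tl_eqv K e e' \<Longrightarrow> tl_wf e \<and> tl_wf e' \<and> tl_dom e = tl_dom e' \<and> tl_cod e = tl_cod e'"
  by (simp add: tl_eqv_def)

lemma tl_eqv_refl: "tl_wf e \<Longrightarrow> tl_eqv K e e"
  using tl_null.zero by (simp add: tl_eqv_def)

lemma tl_eqv_sym: "tl_eqv K e e' \<Longrightarrow> tl_eqv K e' e"
  by (auto simp: tl_eqv_def intro: tl_null_diff_swap)

lemma tl_eqv_trans [trans]: "tl_eqv K e e' \<Longrightarrow> tl_eqv K e' e'' \<Longrightarrow> tl_eqv K e e''"
  by (auto simp: tl_eqv_def intro: tl_null_diff_trans)

lemma tl_zero_eqv: "tl_eqv K e e' \<Longrightarrow> tl_zero K e' \<Longrightarrow> tl_zero K e"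
  by (auto simp: tl_eqv_def tl_zero_def intro: tl_null_diff_null)

lemma tl_eqv_comp_left:
  fixes K :: "'k::field itself"
  assumes "tl_eqv K e e'" and "tl_wf f" and "tl_dom f = tl_cod e"
  shows "tl_eqv K (TComp f e) (TComp f e')"
proof -
  have "tl_null (tl_dom e) (tl_cod f)
      (tl_lcomp (tl_single f) (\<lambda>x. tl_single e x - (tl_single e' x :: 'k)))"
    using assms by (intro tl_null.comp_left) (auto simp: tl_eqv_def dest: tl_wfD)
  with assms show ?thesis by (simp add: tl_eqv_def tl_linear_simps)
qed

lemma tl_eqv_comp_right:
  fixes K :: "'k::field itself"
  assumes "tl_eqv K e e'" and "tl_wf g" and "tl_cod g = tl_dom e"
  shows "tl_eqv K (TComp e g) (TComp e' g)"
proof -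
  have "tl_null (tl_dom g) (tl_cod e)
      (tl_lcomp (\<lambda>x. tl_single e x - (tl_single e' x :: 'k)) (tl_single g))"
    using assms by (intro tl_null.comp_right) (auto simp: tl_eqv_def dest: tl_wfD)
  with assms show ?thesis by (simp add: tl_eqv_def tl_linear_simps)
qed

lemma tl_eqv_tens_left:
  fixes K :: "'k::field itself"
  assumes "tl_eqv K e e'" and "tl_wf f"
  shows "tl_eqv K (TTens f e) (TTens f e')"
proof -
  have "tl_null (tl_dom f + tl_dom e) (tl_cod f + tl_cod e)
      (tl_ltens (tl_single f) (\<lambda>x. tl_single e x - (tl_single e' x :: 'k)))"
    using assms by (intro tl_null.tens_left) (auto simp: tl_eqv_def dest: tl_wfD)
  with assms show ?thesis by (simp add: tl_eqv_def tl_linear_simps)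
qed

lemma tl_eqv_tens_right:
  fixes K :: "'k::field itself"
  assumes "tl_eqv K e e'" and "tl_wf f"
  shows "tl_eqv K (TTens e f) (TTens e' f)"
proof -
  have "tl_null (tl_dom e + tl_dom f) (tl_cod e + tl_cod f)
      (tl_ltens (\<lambda>x. tl_single e x - (tl_single e' x :: 'k)) (tl_single f))"
    using assms by (intro tl_null.tens_right) (auto simp: tl_eqv_def dest: tl_wfD)
  with assms show ?thesis by (simp add: tl_eqv_def tl_linear_simps)
qed

lemma tl_eqv_comp:
  "tl_eqv K e e' \<Longrightarrow> tl_eqv K f f' \<Longrightarrow> tl_dom f = tl_cod e \<Longrightarrow> tl_eqv K (TComp f e) (TComp f' e')"
  by (rule tl_eqv_trans[OF tl_eqv_comp_left tl_eqv_comp_right]) (auto dest: tl_eqvD)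

lemma tl_eqv_tens: "tl_eqv K e e' \<Longrightarrow> tl_eqv K f f' \<Longrightarrow> tl_eqv K (TTens f e) (TTens f' e')"
  by (rule tl_eqv_trans[OF tl_eqv_tens_left tl_eqv_tens_right]) (auto dest: tl_eqvD)

lemma tl_zero_comp_right:
  fixes K :: "'k::field itself"
  assumes "tl_zero K e" and "tl_wf g" and "tl_cod g = tl_dom e"
  shows "tl_zero K (TComp e g)"
proof -
  have "tl_null (tl_dom g) (tl_cod e) (tl_lcomp (tl_single e :: _ \<Rightarrow> 'k) (tl_single g))"
    using assms by (intro tl_null.comp_right) (auto simp: tl_zero_def dest: tl_wfD)
  with assms show ?thesis by (simp add: tl_zero_def tl_linear_simps)
qed

lemma tl_zero_tens_left:
  fixes K :: "'k::field itself"
  assumes "tl_zero K e" and "tl_wf f"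
  shows "tl_zero K (TTens f e)"
proof -
  have "tl_null (tl_dom f + tl_dom e) (tl_cod f + tl_cod e)
      (tl_ltens (tl_single f) (tl_single e :: _ \<Rightarrow> 'k))"
    using assms by (intro tl_null.tens_left) (auto simp: tl_zero_def dest: tl_wfD)
  with assms show ?thesis by (simp add: tl_zero_def tl_linear_simps)
qed

lemma tl_zero_tens_right:
  fixes K :: "'k::field itself"
  assumes "tl_zero K e" and "tl_wf f"
  shows "tl_zero K (TTens e f)"
proof -
  have "tl_null (tl_dom e + tl_dom f) (tl_cod e + tl_cod f)
      (tl_ltens (tl_single e :: _ \<Rightarrow> 'k) (tl_single f))"
    using assms by (intro tl_null.tens_right) (auto simp: tl_zero_def dest: tl_wfD)
  with assms show ?thesis by (simp add: tl_zero_def tl_linear_simps)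
qed

lemma tl_eqv_comp_assoc:
  assumes "tl_wf f" and "tl_wf g" and "tl_wf h" and "tl_dom f = tl_cod g" and "tl_dom g = tl_cod h"
  shows "tl_eqv K (TComp (TComp f g) h) (TComp f (TComp g h))"
proof -
  have "tl_wt h (tl_dom h) (tl_dom g)" "tl_wt g (tl_dom g) (tl_dom f)" "tl_wt f (tl_dom f) (tl_cod f)"
    using assms by (metis tl_wfD)+
  from tl_null.comp_assoc[OF this] show ?thesis
    using assms by (simp add: tl_eqv_def)
qed

lemma tl_eqv_id_left: "tl_wf f \<Longrightarrow> tl_eqv K (TComp (TId (tl_cod f)) f) f"
  using tl_null.id_left[OF tl_wfD] by (simp add: tl_eqv_def)

lemma tl_eqv_id_right: "tl_wf f \<Longrightarrow> tl_eqv K (TComp f (TId (tl_dom f))) f"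
  using tl_null.id_right[OF tl_wfD] by (simp add: tl_eqv_def)

lemma tl_eqv_tens_assoc:
  "tl_wf f \<Longrightarrow> tl_wf g \<Longrightarrow> tl_wf h \<Longrightarrow> tl_eqv K (TTens (TTens f g) h) (TTens f (TTens g h))"
  using tl_null.tens_assoc[OF tl_wfD tl_wfD tl_wfD, of f g h] by (simp add: tl_eqv_def add.assoc)

lemma tl_eqv_unit_left: "tl_wf f \<Longrightarrow> tl_eqv K (TTens (TId 0) f) f"
  using tl_null.tens_unit_left[OF tl_wfD] by (simp add: tl_eqv_def)

lemma tl_eqv_unit_right: "tl_wf f \<Longrightarrow> tl_eqv K (TTens f (TId 0)) f"
  using tl_null.tens_unit_right[OF tl_wfD] by (simp add: tl_eqv_def)

lemma tl_eqv_tens_id: "tl_eqv K (TTens (TId m) (TId n)) (TId (m + n))"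
  using tl_null.tens_id by (simp add: tl_eqv_def)

lemma tl_eqv_interchange:
  assumes "tl_wf f" and "tl_wf g" and "tl_wf h" and "tl_wf k"
    and "tl_dom f = tl_cod g" and "tl_dom h = tl_cod k"
  shows "tl_eqv K (TComp (TTens f h) (TTens g k)) (TTens (TComp f g) (TComp h k))"
proof -
  have "tl_wt g (tl_dom g) (tl_dom f)" "tl_wt f (tl_dom f) (tl_cod f)"
    "tl_wt k (tl_dom k) (tl_dom h)" "tl_wt h (tl_dom h) (tl_cod h)"
    using assms by (metis tl_wfD)+
  from tl_null.interchange[OF this] show ?thesis
    using assms by (simp add: tl_eqv_def)
qed

lemma tl_eqv_circle: "tl_eqv K (TComp TCap TCup) (TId 0)"
  using tl_null.circle by (simp add: tl_eqv_def)

lemma tl_zero_zigzag1: "tl_zero K (TComp (TTens (TId 1) TCap) (TTens TCup (TId 1)))"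
  using tl_null.zigzag1 by (simp add: tl_zero_def)

lemma tl_zero_zigzag2: "tl_zero K (TComp (TTens TCap (TId 1)) (TTens (TId 1) TCup))"
  using tl_null.zigzag2 by (simp add: tl_zero_def)

fun tens_list :: "tl_expr list \<Rightarrow> tl_expr" where
  "tens_list [] = TId 0"
| "tens_list (g # gs) = TTens g (tens_list gs)"

abbreviation ids :: "nat \<Rightarrow> tl_expr list" where
  "ids a \<equiv> replicate a (TId (Suc 0))"

lemma list_all_tl_wf_ids [simp]: "list_all tl_wf (ids a)"
  by (induction a) auto

lemma tl_wf_tens_list [simp]: "tl_wf (tens_list xs) \<longleftrightarrow> list_all tl_wf xs"
  by (induction xs) auto

lemma tl_dom_tens_list_append [simp]:
  "tl_dom (tens_list (xs @ ys)) = tl_dom (tens_list xs) + tl_dom (tens_list ys)"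
  by (induction xs) auto

lemma tl_cod_tens_list_append [simp]:
  "tl_cod (tens_list (xs @ ys)) = tl_cod (tens_list xs) + tl_cod (tens_list ys)"
  by (induction xs) auto

lemma tl_dom_tens_list_ids [simp]: "tl_dom (tens_list (ids a)) = a"
  by (induction a) auto

lemma tl_cod_tens_list_ids [simp]: "tl_cod (tens_list (ids a)) = a"
  by (induction a) auto

lemma tl_eqv_tens_list_append:
  "list_all tl_wf xs \<Longrightarrow> list_all tl_wf ys \<Longrightarrow>
    tl_eqv K (tens_list (xs @ ys)) (TTens (tens_list xs) (tens_list ys))"
proof (induction xs)
  case Nil
  then show ?case by (simp add: tl_eqv_sym tl_eqv_unit_left)
next
  case (Cons g xs)
  then have "tl_eqv K (TTens g (tens_list (xs @ ys))) (TTens g (TTens (tens_list xs) (tens_list ys)))"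
    by (intro tl_eqv_tens_left) simp_all
  also have "tl_eqv K \<dots> (TTens (TTens g (tens_list xs)) (tens_list ys))"
    using Cons by (intro tl_eqv_sym[OF tl_eqv_tens_assoc]) simp_all
  finally show ?case by simp
qed

lemma tl_eqv_tens_list_ids: "tl_eqv K (tens_list (ids a)) (TId a)"
proof (induction a)
  case 0
  then show ?case by (simp add: tl_eqv_refl)
next
  case (Suc a)
  then have "tl_eqv K (TTens (TId (Suc 0)) (tens_list (ids a))) (TTens (TId (Suc 0)) (TId a))"
    by (intro tl_eqv_tens_left) simp_all
  also have "tl_eqv K \<dots> (TId (Suc a))"
    using tl_eqv_tens_id[of K "Suc 0" a] by simp
  finally show ?case by simp
qed

lemma tl_eqv_tens_list_append3:
  "list_all tl_wf xs \<Longrightarrow> list_all tl_wf ms \<Longrightarrow> list_all tl_wf ys \<Longrightarrow>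
    tl_eqv K (tens_list (xs @ ms @ ys)) (TTens (tens_list xs) (TTens (tens_list ms) (tens_list ys)))"
  by (rule tl_eqv_trans[OF tl_eqv_tens_list_append tl_eqv_tens_left[OF tl_eqv_tens_list_append]]) simp_all

lemma tl_eqv_tens_list_pad:
  "list_all tl_wf ms \<Longrightarrow>
    tl_eqv K (tens_list (ids a @ ms @ ids b)) (TTens (TId a) (TTens (tens_list ms) (TId b)))"
  by (rule tl_eqv_trans[OF tl_eqv_tens_list_append3])
    (simp_all add: tl_eqv_tens tl_eqv_tens_list_ids tl_eqv_refl)

lemma tl_eqv_tens_list_singleton: "tl_wf g \<Longrightarrow> tl_eqv K (tens_list [g]) g"
  using tl_eqv_unit_right[of g K] by simp

lemma tl_eqv_tens_list_pair: "tl_wf g \<Longrightarrow> tl_wf h \<Longrightarrow> tl_eqv K (tens_list [g, h]) (TTens g h)"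
  using tl_eqv_tens_left[OF tl_eqv_unit_right[of h K], of g] by simp

lemma tl_eqv_tens_list_slot:
  "list_all tl_wf xs \<Longrightarrow> tl_wf g \<Longrightarrow> list_all tl_wf ys \<Longrightarrow>
    tl_eqv K (tens_list (xs @ g # ys)) (TTens (tens_list xs) (TTens g (tens_list ys)))"
  using tl_eqv_tens_list_append[of xs "g # ys" K] by simp

lemma tl_eqv_tens_list_slot2:
  "list_all tl_wf xs \<Longrightarrow> tl_wf g \<Longrightarrow> tl_wf h \<Longrightarrow> list_all tl_wf ys \<Longrightarrow>
    tl_eqv K (tens_list (xs @ g # h # ys)) (TTens (tens_list xs) (TTens (TTens g h) (tens_list ys)))"
  using tl_eqv_trans[OF tl_eqv_tens_list_append3[of xs "[g, h]" ys K]
      tl_eqv_tens_left[OF tl_eqv_tens_right[OF tl_eqv_tens_list_pair]]]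
  by simp

lemma tl_eqv_ids_slot:
  "tl_wf g \<Longrightarrow> tl_eqv K (tens_list (ids a @ g # ids b)) (TTens (TId a) (TTens g (TId b)))"
  using tl_eqv_trans[OF tl_eqv_tens_list_pad[of "[g]" K a b]
      tl_eqv_tens_left[OF tl_eqv_tens_right[OF tl_eqv_tens_list_singleton]]]
  by simp

lemma tl_eqv_ids_slot2:
  "tl_wf g \<Longrightarrow> tl_wf h \<Longrightarrow>
    tl_eqv K (tens_list (ids a @ g # h # ids b)) (TTens (TId a) (TTens (TTens g h) (TId b)))"
  using tl_eqv_trans[OF tl_eqv_tens_list_pad[of "[g, h]" K a b]
      tl_eqv_tens_left[OF tl_eqv_tens_right[OF tl_eqv_tens_list_pair]]]
  by simp

lemma tl_eqv_slot_comp_after: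
  "tl_wf x1 \<Longrightarrow> tl_wf x2 \<Longrightarrow> tl_wf p \<Longrightarrow> tl_wf q \<Longrightarrow> tl_dom p = tl_cod q \<Longrightarrow>
    tl_eqv K (TComp (TTens (TId (tl_cod x1)) (TTens p (TId (tl_cod x2)))) (TTens x1 (TTens q x2)))
      (TTens x1 (TTens (TComp p q) x2))"
  by (rule tl_eqv_trans[OF tl_eqv_interchange
        tl_eqv_tens[OF tl_eqv_trans[OF tl_eqv_interchange tl_eqv_tens_left[OF tl_eqv_id_left]]
          tl_eqv_id_left]]) simp_all

lemma tl_eqv_slot_comp_before:
  "tl_wf x1 \<Longrightarrow> tl_wf x2 \<Longrightarrow> tl_wf p \<Longrightarrow> tl_wf q \<Longrightarrow> tl_dom p = tl_cod q \<Longrightarrow>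
    tl_eqv K (TComp (TTens x1 (TTens p x2)) (TTens (TId (tl_dom x1)) (TTens q (TId (tl_dom x2)))))
      (TTens x1 (TTens (TComp p q) x2))"
  by (rule tl_eqv_trans[OF tl_eqv_interchange
        tl_eqv_tens[OF tl_eqv_trans[OF tl_eqv_interchange tl_eqv_tens_left[OF tl_eqv_id_right]]
          tl_eqv_id_right]]) simp_all

section \<open>Local moves of a single cap or cup\<close>

abbreviation cap_at :: "nat \<Rightarrow> nat \<Rightarrow> tl_expr" where
  "cap_at a b \<equiv> tens_list (ids a @ TCap # ids b)"

abbreviation cup_at :: "nat \<Rightarrow> nat \<Rightarrow> tl_expr" where
  "cup_at a b \<equiv> tens_list (ids a @ TCup # ids b)"

lemma tl_eqv_cap_at_cup:
  assumes "list_all tl_wf xs" and "list_all tl_wf ys"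
  shows "tl_eqv K
    (TComp (cap_at (tl_cod (tens_list xs)) (tl_cod (tens_list ys))) (tens_list (xs @ TCup # ys)))
    (tens_list (xs @ ys))"
proof -
  let ?X = "tens_list xs" and ?Y = "tens_list ys"
  have "tl_eqv K (TComp (cap_at (tl_cod ?X) (tl_cod ?Y)) (tens_list (xs @ TCup # ys)))
      (TComp (TTens (TId (tl_cod ?X)) (TTens TCap (TId (tl_cod ?Y)))) (TTens ?X (TTens TCup ?Y)))"
    using assms by (intro tl_eqv_comp tl_eqv_tens_list_slot tl_eqv_ids_slot) simp_all
  also have "tl_eqv K \<dots> (TTens ?X (TTens (TComp TCap TCup) ?Y))"
    using assms by (intro tl_eqv_slot_comp_after) simp_all
  also have "tl_eqv K \<dots> (TTens ?X (TTens (TId 0) ?Y))"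
    using assms by (intro tl_eqv_tens_left tl_eqv_tens_right tl_eqv_circle) simp_all
  also have "tl_eqv K \<dots> (TTens ?X ?Y)"
    using assms by (intro tl_eqv_tens_left tl_eqv_unit_left) simp_all
  also have "tl_eqv K \<dots> (tens_list (xs @ ys))"
    using assms by (intro tl_eqv_sym[OF tl_eqv_tens_list_append])
  finally show ?thesis .
qed

lemma tl_eqv_cap_at_ids:
  assumes "list_all tl_wf xs" and "list_all tl_wf ys"
  shows "tl_eqv K (TComp (cap_at (tl_cod (tens_list xs)) (tl_cod (tens_list ys)))
      (tens_list (xs @ TId (Suc 0) # TId (Suc 0) # ys)))
    (TTens (tens_list xs) (TTens TCap (tens_list ys)))"
proof -
  let ?X = "tens_list xs" and ?Y = "tens_list ys" and ?I = "TId (Suc 0)"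
  have "tl_eqv K (TComp (cap_at (tl_cod ?X) (tl_cod ?Y)) (tens_list (xs @ ?I # ?I # ys)))
      (TComp (TTens (TId (tl_cod ?X)) (TTens TCap (TId (tl_cod ?Y)))) (TTens ?X (TTens (TTens ?I ?I) ?Y)))"
    using assms by (intro tl_eqv_comp tl_eqv_tens_list_slot2 tl_eqv_ids_slot) simp_all
  also have "tl_eqv K \<dots> (TTens ?X (TTens (TComp TCap (TTens ?I ?I)) ?Y))"
    using assms by (intro tl_eqv_slot_comp_after) simp_all
  also have "tl_eqv K \<dots> (TTens ?X (TTens TCap ?Y))"
  proof -
    have "tl_eqv K (TComp TCap (TTens ?I ?I)) (TComp TCap (TId 2))"
      using tl_eqv_tens_id[of K "Suc 0" "Suc 0"]
      by (intro tl_eqv_comp_left) (simp_all add: numeral_2_eq_2)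
    also have "tl_eqv K \<dots> TCap"
      using tl_eqv_id_right[of TCap K] by simp
    finally show ?thesis
      using assms by (intro tl_eqv_tens_left tl_eqv_tens_right) simp_all
  qed
  finally show ?thesis .
qed

lemma tl_eqv_cap_at_ids_slot:
  "list_all tl_wf xs \<Longrightarrow> list_all tl_wf ys \<Longrightarrow>
    tl_eqv K (TComp (cap_at (tl_cod (tens_list xs)) (tl_cod (tens_list ys)))
      (tens_list (xs @ TId (Suc 0) # TId (Suc 0) # ys)))
    (tens_list (xs @ TCap # ys))"
  by (rule tl_eqv_trans[OF tl_eqv_cap_at_ids tl_eqv_sym[OF tl_eqv_tens_list_slot]]) simp_all

lemma tl_eqv_cap_at_slide:
  assumes "list_all tl_wf xs" and "list_all tl_wf ys"
  shows "tl_eqv K (TComp (cap_at (tl_cod (tens_list xs)) (tl_cod (tens_list ys)))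
      (tens_list (xs @ TId (Suc 0) # TId (Suc 0) # ys)))
    (TComp (tens_list (xs @ ys)) (cap_at (tl_dom (tens_list xs)) (tl_dom (tens_list ys))))"
proof -
  let ?X = "tens_list xs" and ?Y = "tens_list ys"
  have "tl_eqv K (TComp (tens_list (xs @ ys)) (cap_at (tl_dom ?X) (tl_dom ?Y)))
      (TComp (TTens ?X (TTens (TId 0) ?Y)) (TTens (TId (tl_dom ?X)) (TTens TCap (TId (tl_dom ?Y)))))"
    using assms
    by (intro tl_eqv_comp tl_eqv_ids_slot
        tl_eqv_trans[OF tl_eqv_tens_list_append tl_eqv_tens_left[OF tl_eqv_sym[OF tl_eqv_unit_left]]])
      simp_all
  also have "tl_eqv K \<dots> (TTens ?X (TTens (TComp (TId 0) TCap) ?Y))"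
    using assms by (intro tl_eqv_slot_comp_before) simp_all
  also have "tl_eqv K \<dots> (TTens ?X (TTens TCap ?Y))"
    using assms tl_eqv_id_left[of TCap K] by (intro tl_eqv_tens_left tl_eqv_tens_right) simp_all
  finally show ?thesis
    using assms by (intro tl_eqv_trans[OF tl_eqv_cap_at_ids tl_eqv_sym])
qed

lemma tl_eqv_cup_factor:
  assumes "list_all tl_wf xs" and "list_all tl_wf ys"
  shows "tl_eqv K (tens_list (xs @ TCup # ys))
    (TComp (cup_at (tl_cod (tens_list xs)) (tl_cod (tens_list ys))) (tens_list (xs @ ys)))"
proof -
  let ?X = "tens_list xs" and ?Y = "tens_list ys"
  have "tl_eqv K (TComp (cup_at (tl_cod ?X) (tl_cod ?Y)) (tens_list (xs @ ys)))
      (TComp (TTens (TId (tl_cod ?X)) (TTens TCup (TId (tl_cod ?Y)))) (TTens ?X (TTens (TId 0) ?Y)))"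
    using assms
    by (intro tl_eqv_comp tl_eqv_ids_slot
        tl_eqv_trans[OF tl_eqv_tens_list_append tl_eqv_tens_left[OF tl_eqv_sym[OF tl_eqv_unit_left]]])
      simp_all
  also have "tl_eqv K \<dots> (TTens ?X (TTens (TComp TCup (TId 0)) ?Y))"
    using assms by (intro tl_eqv_slot_comp_after) simp_all
  also have "tl_eqv K \<dots> (TTens ?X (TTens TCup ?Y))"
    using assms tl_eqv_id_right[of TCup K] by (intro tl_eqv_tens_left tl_eqv_tens_right) simp_all
  finally show ?thesis
    using assms by (intro tl_eqv_trans[OF tl_eqv_tens_list_slot tl_eqv_sym]) simp_all
qed

lemma tl_zero_zigzag1_padded:
  "tl_zero K (TComp (tens_list (ids a @ TId (Suc 0) # TCap # ids b))
    (tens_list (ids a @ TCup # TId (Suc 0) # ids b)))"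
proof -
  let ?I = "TId (Suc 0)"
  have "tl_eqv K (TComp (tens_list (ids a @ ?I # TCap # ids b)) (tens_list (ids a @ TCup # ?I # ids b)))
      (TComp (TTens (TId a) (TTens (TTens ?I TCap) (TId b))) (TTens (TId a) (TTens (TTens TCup ?I) (TId b))))"
    by (intro tl_eqv_comp tl_eqv_ids_slot2) simp_all
  also have "tl_eqv K \<dots> (TTens (TId a) (TTens (TComp (TTens ?I TCap) (TTens TCup ?I)) (TId b)))"
    using tl_eqv_slot_comp_after[of "TId a" "TId b" "TTens ?I TCap" "TTens TCup ?I" K] by simp
  finally show ?thesis
    by (rule tl_zero_eqv) (use tl_zero_zigzag1[of K] in \<open>simp add: tl_zero_tens_left[OF tl_zero_tens_right]\<close>)
qed

lemma tl_zero_zigzag2_padded: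
  "tl_zero K (TComp (tens_list (ids a @ TCap # TId (Suc 0) # ids b))
    (tens_list (ids a @ TId (Suc 0) # TCup # ids b)))"
proof -
  let ?I = "TId (Suc 0)"
  have "tl_eqv K (TComp (tens_list (ids a @ TCap # ?I # ids b)) (tens_list (ids a @ ?I # TCup # ids b)))
      (TComp (TTens (TId a) (TTens (TTens TCap ?I) (TId b))) (TTens (TId a) (TTens (TTens ?I TCup) (TId b))))"
    by (intro tl_eqv_comp tl_eqv_ids_slot2) simp_all
  also have "tl_eqv K \<dots> (TTens (TId a) (TTens (TComp (TTens TCap ?I) (TTens ?I TCup)) (TId b)))"
    using tl_eqv_slot_comp_after[of "TId a" "TId b" "TTens TCap ?I" "TTens ?I TCup" K] by simp
  finally show ?thesis
    by (rule tl_zero_eqv) (use tl_zero_zigzag2[of K] in \<open>simp add: tl_zero_tens_left[OF tl_zero_tens_right]\<close>)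
qed

text \<open>\<open>arc_pattern I k r\<close> lists the generators of \<open>capx I k r\<close> and \<open>cupx I k r\<close> from left
  to right: \<open>True\<close> for a cap or cup, \<open>False\<close> for a through-strand.\<close>

fun arc_pattern :: "nat set \<Rightarrow> nat \<Rightarrow> nat \<Rightarrow> bool list" where
  "arc_pattern I k 0 = []"
| "arc_pattern I k (Suc 0) = [False]"
| "arc_pattern I k (Suc (Suc r)) =
     (if k \<in> I then True # arc_pattern I (k + 2) r else False # arc_pattern I (k + 1) (Suc r))"

definition arc_gen :: "tl_expr \<Rightarrow> bool \<Rightarrow> tl_expr" where
  "arc_gen G b = (if b then G else TId (Suc 0))"

lemma arc_gen_simps [simp]: "arc_gen G True = G" "arc_gen G False = TId (Suc 0)"
  by (simp_all add: arc_gen_def)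

abbreviation cup_gens :: "bool list \<Rightarrow> tl_expr list" where
  "cup_gens \<equiv> map (arc_gen TCup)"

abbreviation cap_gens :: "bool list \<Rightarrow> tl_expr list" where
  "cap_gens \<equiv> map (arc_gen TCap)"

lemma map_arc_gen_replicate_False [simp]: "map (arc_gen G) (replicate r False) = ids r"
  by (induction r) auto

lemma list_all_tl_wf_arc_gens [simp]: "tl_wf G \<Longrightarrow> list_all tl_wf (map (arc_gen G) s)"
  by (induction s) (auto simp: arc_gen_def)

lemma capx_eq_tens_list: "capx I k r = tens_list (cap_gens (arc_pattern I k r))"
  by (induction I k r rule: capx.induct) auto

lemma cupx_eq_tens_list: "cupx I k r = tens_list (cup_gens (arc_pattern I k r))"
  by (induction I k r rule: cupx.induct) auto

lemma tl_cod_cup_gens_arc_pattern [simp]: "tl_cod (tens_list (cup_gens (arc_pattern I k r))) = r"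
  by (induction I k r rule: arc_pattern.induct) auto

lemma tl_dom_cap_gens_arc_pattern [simp]: "tl_dom (tens_list (cap_gens (arc_pattern I k r))) = r"
  by (induction I k r rule: arc_pattern.induct) auto

lemma tl_cod_cap_gens [simp]: "tl_cod (tens_list (cap_gens s)) = tl_dom (tens_list (cup_gens s))"
  by (induction s) (auto simp: arc_gen_def)

lemma arc_pattern_append:
  "a = 0 \<or> k + a - 1 \<notin> I \<Longrightarrow> arc_pattern I k (a + b) = arc_pattern I k a @ arc_pattern I (k + a) b"
proof (induction I k a arbitrary: b rule: arc_pattern.induct)
  case (2 I k)
  then show ?case by (cases b) auto
next
  case (3 I k r)
  have "Suc (Suc r) + b = Suc (Suc (r + b))" by simp
  with 3 show ?case by (cases "k \<in> I") (simp_all add: add.assoc)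
qed simp

lemma arc_pattern_cong:
  "(\<And>p. k \<le> p \<Longrightarrow> p < k + r \<Longrightarrow> p \<in> I \<longleftrightarrow> p \<in> J) \<Longrightarrow> arc_pattern I k r = arc_pattern J k r"
  by (induction I k r rule: arc_pattern.induct) auto

lemma arc_pattern_disjoint:
  "(\<And>p. k \<le> p \<Longrightarrow> p < k + r \<Longrightarrow> p \<notin> I) \<Longrightarrow> arc_pattern I k r = replicate r False"
  by (induction I k r rule: arc_pattern.induct) auto

lemma arc_pattern_arc:
  assumes "1 \<le> i" and "i < n" and "i \<in> I" and "i - 1 \<notin> I"
  shows "arc_pattern I 1 n = arc_pattern I 1 (i - 1) @ True # arc_pattern I (i + 2) (n - i - 1)"
proof -
  have "n = (i - 1) + Suc (Suc (n - i - 1))" using assms(1,2) by simp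
  then show ?thesis
    using arc_pattern_append[of "i - 1" 1 I "Suc (Suc (n - i - 1))"] assms by auto
qed

lemma arc_pattern_gap:
  assumes "1 \<le> i" and "i < n" and "i \<notin> I" and "i + 1 \<notin> I" and "i - 1 \<notin> I"
  shows "arc_pattern I 1 n =
    arc_pattern I 1 (i - 1) @ False # False # arc_pattern I (i + 2) (n - i - 1)"
proof -
  have "n = (i - 1) + Suc (Suc (n - i - 1))" using assms(1,2) by simp
  moreover have
    "arc_pattern I i (Suc (Suc (n - i - 1))) = False # False # arc_pattern I (i + 2) (n - i - 1)"
    using assms(3,4) by (cases "n - i - 1") (auto simp: add.commute)
  ultimately show ?thesis
    using arc_pattern_append[of "i - 1" 1 I "Suc (Suc (n - i - 1))"] assms by auto
qed

section \<open>The summands of \<open>cap\<^sub>i \<circ> j\<^sub>n\<close>\<close>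

lemma tl_eqv_cap_at_arc_insert:
  fixes L R :: "bool list"
  defines "C \<equiv> cap_at (tl_cod (tens_list (cup_gens L))) (tl_cod (tens_list (cup_gens R)))"
  shows "tl_eqv K
      (TComp C (TComp (tens_list (cup_gens L @ TId (Suc 0) # TId (Suc 0) # cup_gens R))
        (tens_list (cap_gens L @ TId (Suc 0) # TId (Suc 0) # cap_gens R))))
      (TComp C (TComp (tens_list (cup_gens L @ TCup # cup_gens R))
        (tens_list (cap_gens L @ TCap # cap_gens R))))"
proof -
  let ?cups = "tens_list (cup_gens L @ TId (Suc 0) # TId (Suc 0) # cup_gens R)"
  let ?caps = "tens_list (cap_gens L @ TId (Suc 0) # TId (Suc 0) # cap_gens R)"
  let ?cups' = "tens_list (cup_gens L @ TCup # cup_gens R)"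
  let ?caps' = "tens_list (cap_gens L @ TCap # cap_gens R)"
  let ?cups_rest = "tens_list (cup_gens L @ cup_gens R)"
  let ?C' = "cap_at (tl_dom (tens_list (cup_gens L))) (tl_dom (tens_list (cup_gens R)))"
  have "tl_eqv K (TComp C (TComp ?cups ?caps)) (TComp (TComp C ?cups) ?caps)"
    unfolding C_def by (intro tl_eqv_sym[OF tl_eqv_comp_assoc]) simp_all
  also have "tl_eqv K \<dots> (TComp (TComp ?cups_rest ?C') ?caps)"
    unfolding C_def by (intro tl_eqv_comp_right tl_eqv_cap_at_slide) simp_all
  also have "tl_eqv K \<dots> (TComp ?cups_rest (TComp ?C' ?caps))"
    by (intro tl_eqv_comp_assoc) simp_all
  also have "tl_eqv K \<dots> (TComp ?cups_rest ?caps')"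
    using tl_eqv_cap_at_ids_slot[of "cap_gens L" "cap_gens R" K] by (intro tl_eqv_comp_left) simp_all
  also have "tl_eqv K \<dots> (TComp (TComp C ?cups') ?caps')"
    unfolding C_def using tl_eqv_cap_at_cup[of "cup_gens L" "cup_gens R" K]
    by (intro tl_eqv_sym[OF tl_eqv_comp_right]) simp_all
  also have "tl_eqv K \<dots> (TComp C (TComp ?cups' ?caps'))"
    unfolding C_def by (intro tl_eqv_comp_assoc) simp_all
  finally show ?thesis .
qed

lemma tl_zero_comp_cup_arc:
  assumes "tl_zero K
    (TComp C (cup_at (tl_cod (tens_list (cup_gens L))) (tl_cod (tens_list (cup_gens R)))))"
  shows "tl_zero K (TComp C (TComp (tens_list (cup_gens L @ TCup # cup_gens R))
    (tens_list (cap_gens L @ TCap # cap_gens R))))"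
proof -
  let ?U = "cup_at (tl_cod (tens_list (cup_gens L))) (tl_cod (tens_list (cup_gens R)))"
  let ?W = "tens_list (cup_gens L @ cup_gens R)"
  let ?cups = "tens_list (cup_gens L @ TCup # cup_gens R)"
  let ?caps = "tens_list (cap_gens L @ TCap # cap_gens R)"
  have C: "tl_wf C" "tl_dom C = tl_cod ?U"
    using assms by (auto simp: tl_zero_def)
  have "tl_eqv K (TComp C (TComp ?cups ?caps)) (TComp C (TComp (TComp ?U ?W) ?caps))"
    using C tl_eqv_cup_factor[of "cup_gens L" "cup_gens R" K]
    by (intro tl_eqv_comp_left tl_eqv_comp_right) simp_all
  also have "tl_eqv K \<dots> (TComp C (TComp ?U (TComp ?W ?caps)))"
    using C by (intro tl_eqv_comp_left tl_eqv_comp_assoc) simp_all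
  also have "tl_eqv K \<dots> (TComp (TComp C ?U) (TComp ?W ?caps))"
    using C by (intro tl_eqv_sym[OF tl_eqv_comp_assoc]) simp_all
  finally show ?thesis
    by (rule tl_zero_eqv) (rule tl_zero_comp_right[OF assms], simp_all)
qed

lemma cap_I_singleton:
  assumes "1 \<le> i" and "i < n"
  shows "cap_I {i} n = cap_at (i - 1) (n - i - 1)"
proof -
  have "arc_pattern {i} 1 (i - 1) = replicate (i - 1) False"
    "arc_pattern {i} (i + 2) (n - i - 1) = replicate (n - i - 1) False"
    by (auto intro: arc_pattern_disjoint)
  moreover have "i - 1 \<notin> {i}"
    using assms(1) by simp
  ultimately have "arc_pattern {i} 1 n = replicate (i - 1) False @ True # replicate (n - i - 1) False"
    using arc_pattern_arc[of i n "{i}"] assms by simp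
  then show ?thesis by (simp add: cap_I_def capx_eq_tens_list)
qed

definition capped_summand :: "nat \<Rightarrow> nat \<Rightarrow> nat set \<Rightarrow> tl_expr" where
  "capped_summand n i I = TComp (cap_I {i} n) (TComp (cup_I I n) (cap_I I n))"

lemma tl_dom_capped_summand: "tl_dom (capped_summand n i I) = n"
  by (simp add: capped_summand_def cap_I_def capx_eq_tens_list)

lemma tl_cod_capped_summand: "1 \<le> i \<Longrightarrow> i < n \<Longrightarrow> tl_cod (capped_summand n i I) = n - 2"
  by (simp add: capped_summand_def cap_I_singleton)

lemma apt_no_succ: "I \<in> apt n \<Longrightarrow> j \<in> I \<Longrightarrow> Suc j \<notin> I"
  by (simp add: apt_def)

lemma tl_zero_capped_summand_succ:
  assumes "1 \<le> i" and "i < n" and "I \<in> apt n" and "i \<notin> I" and "i + 1 \<in> I"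
  shows "tl_zero K (capped_summand n i I)"
proof -
  have "i + 1 < n" using assms(3,5) by (auto simp: apt_def le_less)
  then have pattern: "arc_pattern I 1 n = arc_pattern I 1 i @ True # arc_pattern I (i + 3) (n - i - 2)"
    using arc_pattern_arc[of "i + 1" n I] assms by (simp add: numeral_3_eq_3)
  have "Suc (i - 1) = i"
    using assms(1) by simp
  then have ids_i: "ids i = ids (i - 1) @ [TId (Suc 0)]"
    by (metis replicate_Suc replicate_append_same)
  have "n - i - 1 = Suc (n - i - 2)"
    using \<open>i + 1 < n\<close> by simp
  then have "cap_I {i} n = tens_list (ids (i - 1) @ TCap # TId (Suc 0) # ids (n - i - 2))"
    using cap_I_singleton[OF assms(1,2)] by simp
  with ids_i have "tl_zero K (TComp (cap_I {i} n) (cup_at i (n - i - 2)))"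
    using tl_zero_zigzag2_padded[of K "i - 1" "n - i - 2"] by simp
  then show ?thesis
    unfolding capped_summand_def cup_I_def cap_I_def[of I] cupx_eq_tens_list capx_eq_tens_list pattern
    using tl_zero_comp_cup_arc[of K "cap_I {i} n" "arc_pattern I 1 i"
        "arc_pattern I (i + 3) (n - i - 2)"]
    by simp
qed

lemma tl_zero_capped_summand_pred:
  assumes "i < n" and "I \<in> apt n" and "i - 1 \<in> I"
  shows "tl_zero K (capped_summand n i I)"
proof -
  have "1 \<le> i - 1"
    using assms(2,3) by (auto simp: apt_def)
  then have "2 \<le> i"
    by simp
  then have pred_pred: "Suc (i - 2) = i - 1"
    by simp
  then have "i - 2 \<notin> I"
    using apt_no_succ[OF assms(2), of "i - 2"] assms(3) by auto
  then have pattern: "arc_pattern I 1 n = arc_pattern I 1 (i - 2) @ True # arc_pattern I (i + 1) (n - i)"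
    using arc_pattern_arc[of "i - 1" n I] assms \<open>2 \<le> i\<close> by (simp add: numeral_2_eq_2)
  have "ids (i - 1) = ids (i - 2) @ [TId (Suc 0)]"
    using pred_pred by (metis replicate_Suc replicate_append_same)
  then have "cap_I {i} n = tens_list (ids (i - 2) @ TId (Suc 0) # TCap # ids (n - i - 1))"
    using cap_I_singleton[of i n] assms(1) \<open>2 \<le> i\<close> by simp
  moreover have "ids (n - i) = TId (Suc 0) # ids (n - i - 1)"
    using assms(1) by (simp add: Suc_diff_Suc flip: replicate_Suc)
  ultimately have "tl_zero K (TComp (cap_I {i} n) (cup_at (i - 2) (n - i)))"
    using tl_zero_zigzag1_padded[of K "i - 2" "n - i - 1"] by simp
  then show ?thesis
    unfolding capped_summand_def cup_I_def cap_I_def[of I] cupx_eq_tens_list capx_eq_tens_list pattern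
    using tl_zero_comp_cup_arc[of K "cap_I {i} n" "arc_pattern I 1 (i - 2)"
        "arc_pattern I (i + 1) (n - i)"]
    by simp
qed

lemma tl_eqv_capped_summand_insert:
  assumes "1 \<le> i" and "i < n" and "i \<notin> I" and "i + 1 \<notin> I" and "i - 1 \<notin> I"
  shows "tl_eqv K (capped_summand n i I) (capped_summand n i (insert i I))"
proof -
  let ?L = "arc_pattern I 1 (i - 1)" and ?R = "arc_pattern I (i + 2) (n - i - 1)"
  have "arc_pattern I 1 n = ?L @ False # False # ?R"
    using arc_pattern_gap[OF assms] .
  moreover have "arc_pattern (insert i I) 1 n = ?L @ True # ?R"
  proof -
    have "arc_pattern (insert i I) 1 (i - 1) = ?L"
      by (rule arc_pattern_cong) auto
    moreover have "arc_pattern (insert i I) (i + 2) (n - i - 1) = ?R"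
      by (rule arc_pattern_cong) auto
    moreover have "i - 1 \<notin> insert i I"
      using assms(1,5) by auto
    ultimately show ?thesis
      using arc_pattern_arc[of i n "insert i I"] assms(1,2) by simp
  qed
  moreover have
    "cap_I {i} n = cap_at (tl_cod (tens_list (cup_gens ?L))) (tl_cod (tens_list (cup_gens ?R)))"
    using cap_I_singleton[OF assms(1,2)] by simp
  ultimately show ?thesis
    unfolding capped_summand_def cup_I_def cap_I_def cupx_eq_tens_list capx_eq_tens_list
    using tl_eqv_cap_at_arc_insert[of K ?L ?R] by simp
qed

section \<open>Cancellation in the sum\<close>

lemma tl_null_sum_pairing:
  fixes g :: "'a \<Rightarrow> tl_expr \<Rightarrow> 'k::field"
  assumes "finite S" and "bij_betw h C A" and "A \<subseteq> S" and "C \<subseteq> S - A"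
    and "\<And>s. s \<in> S - (A \<union> C) \<Longrightarrow> tl_null a b (g s)"
    and "\<And>s. s \<in> C \<Longrightarrow> tl_null a b (\<lambda>x. g s x + g (h s) x)"
  shows "tl_null a b (\<lambda>x. \<Sum>s\<in>S. g s x)"
proof -
  have fin: "finite A" "finite C"
    using assms(1,3,4) by (auto intro: finite_subset)
  have "(\<Sum>s\<in>S. g s x) = (\<Sum>s\<in>S - (A \<union> C). g s x) + (\<Sum>s\<in>C. g s x + g (h s) x)" for x
  proof -
    have "(\<Sum>s\<in>S. g s x) = (\<Sum>s\<in>S - (A \<union> C). g s x) + (\<Sum>s\<in>A \<union> C. g s x)"
      using assms(1,3,4) by (intro sum.subset_diff) auto
    also have "(\<Sum>s\<in>A \<union> C. g s x) = (\<Sum>s\<in>A. g s x) + (\<Sum>s\<in>C. g s x)"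
      using fin assms(4) by (intro sum.union_disjoint) auto
    also have "(\<Sum>s\<in>A. g s x) = (\<Sum>s\<in>C. g (h s) x)"
      by (rule sum.reindex_bij_betw[OF assms(2), symmetric])
    finally show ?thesis
      by (simp add: sum.distrib)
  qed
  moreover have "tl_null a b (\<lambda>x. (\<Sum>s\<in>S - (A \<union> C). g s x) + (\<Sum>s\<in>C. g s x + g (h s) x))"
  proof (rule tl_null.add)
    show "tl_null a b (\<lambda>x. \<Sum>s\<in>S - (A \<union> C). g s x)"
      using assms(1,5) by (rule tl_null_sum[OF finite_Diff])
    show "tl_null a b (\<lambda>x. \<Sum>s\<in>C. g s x + g (h s) x)"
      using fin(2) assms(6) by (rule tl_null_sum)
  qed
  ultimately show ?thesis
    by simp
qed

lemma apt_finite: "finite (apt n)"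
  by (rule finite_subset[of _ "Pow {1..n}"]) (auto simp: apt_def)

lemma apt_insert_bij:
  assumes "1 \<le> i" and "i < n"
  shows "bij_betw (insert i) {I \<in> apt n. i \<notin> I \<and> i + 1 \<notin> I \<and> i - 1 \<notin> I} {I \<in> apt n. i \<in> I}"
proof (rule bij_betw_byWitness[where f' = "\<lambda>I. I - {i}"])
  show "insert i ` {I \<in> apt n. i \<notin> I \<and> i + 1 \<notin> I \<and> i - 1 \<notin> I} \<subseteq> {I \<in> apt n. i \<in> I}"
    using assms by (auto simp: apt_def)
  show "(\<lambda>I. I - {i}) ` {I \<in> apt n. i \<in> I} \<subseteq> {I \<in> apt n. i \<notin> I \<and> i + 1 \<notin> I \<and> i - 1 \<notin> I}"
    using assms by (auto simp: apt_def)
qed auto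

lemma tl_lcomp_cap_jn:
  "tl_lcomp (tl_single (cap_I {i} n)) (jn n :: _ \<Rightarrow> 'k::field) =
    (\<lambda>x. \<Sum>I\<in>apt n. (-1) ^ card I * tl_single (capped_summand n i I) x)"
proof
  fix x
  show "tl_lcomp (tl_single (cap_I {i} n)) (jn n :: _ \<Rightarrow> 'k) x =
      (\<Sum>I\<in>apt n. (-1) ^ card I * tl_single (capped_summand n i I) x)"
  proof (cases x)
    case (TComp p q)
    then show ?thesis
      by (cases "p = cap_I {i} n")
        (auto simp: tl_lcomp_def tl_single_def jn_def capped_summand_def intro!: sum.cong)
  qed (simp_all add: tl_lcomp_def tl_single_def capped_summand_def)
qed

lemma tl_null_cap_comp_jn:
  assumes "1 \<le> i" and "i < n"
  shows "tl_null n (n - 2) (tl_lcomp (tl_single (cap_I {i} n)) (jn n :: _ \<Rightarrow> 'k::field))"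
proof -
  define g :: "nat set \<Rightarrow> tl_expr \<Rightarrow> 'k" where
    "g I x = (-1) ^ card I * tl_single (capped_summand n i I) x" for I x
  define A where "A = {I \<in> apt n. i \<in> I}"
  define C where "C = {I \<in> apt n. i \<notin> I \<and> i + 1 \<notin> I \<and> i - 1 \<notin> I}"
  have "tl_null n (n - 2) (g I)" if "I \<in> apt n - (A \<union> C)" for I
  proof -
    from that have "I \<in> apt n" "i \<notin> I" "i + 1 \<in> I \<or> i - 1 \<in> I"
      by (auto simp: A_def C_def)
    then have "tl_zero TYPE('k) (capped_summand n i I)"
      using assms tl_zero_capped_summand_succ tl_zero_capped_summand_pred by blast
    then show ?thesis
      unfolding g_def tl_zero_def using assms
      by (auto simp: tl_dom_capped_summand tl_cod_capped_summand intro: tl_null.smult)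
  qed
  moreover have "tl_null n (n - 2) (\<lambda>x. g I x + g (insert i I) x)" if "I \<in> C" for I
  proof -
    from that have I: "I \<in> apt n" "i \<notin> I" "i + 1 \<notin> I" "i - 1 \<notin> I"
      by (auto simp: C_def)
    then have "card (insert i I) = Suc (card I)"
      by (auto simp: apt_def finite_subset)
    then have "(\<lambda>x. g I x + g (insert i I) x) = (\<lambda>x. (-1) ^ card I *
        (tl_single (capped_summand n i I) x - tl_single (capped_summand n i (insert i I)) x))"
      by (simp add: g_def fun_eq_iff algebra_simps)
    moreover have "tl_eqv TYPE('k) (capped_summand n i I) (capped_summand n i (insert i I))"
      using tl_eqv_capped_summand_insert assms I by blast
    ultimately show ?thesis
      unfolding tl_eqv_def using assms
      by (auto simp: tl_dom_capped_summand tl_cod_capped_summand intro: tl_null.smult)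
  qed
  ultimately have "tl_null n (n - 2) (\<lambda>x. \<Sum>I\<in>apt n. g I x)"
    using apt_insert_bij[OF assms]
    by (intro tl_null_sum_pairing[where A = A and C = C and h = "insert i"])
      (auto simp: A_def C_def apt_finite)
  then show ?thesis
    by (simp add: tl_lcomp_cap_jn g_def)
qed

section \<open>Reflection\<close>

fun tl_mirror :: "tl_expr \<Rightarrow> tl_expr" where
  "tl_mirror (TId n) = TId n"
| "tl_mirror TCup = TCap"
| "tl_mirror TCap = TCup"
| "tl_mirror (TComp f g) = TComp (tl_mirror g) (tl_mirror f)"
| "tl_mirror (TTens f g) = TTens (tl_mirror f) (tl_mirror g)"

lemma tl_mirror_mirror [simp]: "tl_mirror (tl_mirror e) = e"
  by (induction e) auto

lemma tl_mirror_eq_iff: "tl_mirror x = y \<longleftrightarrow> x = tl_mirror y"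
  by auto

lemma tl_single_mirror [simp]: "tl_single e (tl_mirror x) = tl_single (tl_mirror e) x"
  by (auto simp: tl_single_def tl_mirror_eq_iff)

lemma tl_wt_mirror: "tl_wt e a b \<Longrightarrow> tl_wt (tl_mirror e) b a"
  by (induction rule: tl_wt.induct) (auto intro: tl_wt.intros)

lemma tl_lcomp_mirror:
  "(\<lambda>x. tl_lcomp u v (tl_mirror x)) = tl_lcomp (\<lambda>x. v (tl_mirror x)) (\<lambda>x. u (tl_mirror x) :: 'k::field)"
  by (auto simp: fun_eq_iff tl_lcomp_def mult.commute split: tl_expr.split)

lemma tl_ltens_mirror:
  "(\<lambda>x. tl_ltens u v (tl_mirror x)) = tl_ltens (\<lambda>x. u (tl_mirror x)) (\<lambda>x. v (tl_mirror x) :: 'k::field)"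
  by (auto simp: fun_eq_iff tl_ltens_def split: tl_expr.split)

lemma tl_null_mirror: "tl_null a b v \<Longrightarrow> tl_null b a (\<lambda>x. v (tl_mirror x) :: 'k::field)"
proof (induction rule: tl_null.induct)
  case (comp_assoc h a b g c f d)
  then show ?case
    by (auto intro: tl_null_diff_swap tl_null.comp_assoc tl_wt_mirror)
next
  case (interchange g a b f c k d e h l)
  then show ?case
    by (auto intro: tl_null.interchange tl_wt_mirror)
next
  case (comp_left a b v f c)
  then show ?case
    by (simp add: tl_lcomp_mirror tl_null.comp_right tl_wt_mirror)
next
  case (comp_right a b v g c)
  then show ?case
    by (simp add: tl_lcomp_mirror tl_null.comp_left tl_wt_mirror)
next
  case (tens_left a b v f c d)
  then show ?case
    by (simp add: tl_ltens_mirror tl_null.tens_left tl_wt_mirror)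
next
  case (tens_right a b v f c d)
  then show ?case
    by (simp add: tl_ltens_mirror tl_null.tens_right tl_wt_mirror)
next
  case zigzag1
  show ?case
    using tl_null.zigzag2 by simp
next
  case zigzag2
  show ?case
    using tl_null.zigzag1 by simp
qed (auto intro: tl_null.intros tl_wt_mirror)

lemma tl_mirror_capx: "tl_mirror (capx I k r) = cupx I k r"
  by (induction I k r rule: capx.induct) auto

lemma tl_mirror_cupx: "tl_mirror (cupx I k r) = capx I k r"
  by (induction I k r rule: cupx.induct) auto

lemma jn_mirror: "(\<lambda>x. jn n (tl_mirror x)) = jn n"
  by (simp add: fun_eq_iff jn_def tl_mirror_eq_iff cap_I_def cup_I_def tl_mirror_capx tl_mirror_cupx)

theorem mainTheorem6:
  fixes n i :: nat
  assumes "n \<ge> 1" and "1 \<le> i" and "i \<le> n - 1"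
  shows "tl_null n (n - 2) (tl_lcomp (tl_single (cap_I {i} n)) (jn n :: tl_expr \<Rightarrow> 'k::field))
       \<and> tl_null (n - 2) n (tl_lcomp (jn n :: tl_expr \<Rightarrow> 'k) (tl_single (cup_I {i} n)))"
proof
  have "i < n"
    using assms by simp
  then show cap_jn: "tl_null n (n - 2) (tl_lcomp (tl_single (cap_I {i} n)) (jn n :: tl_expr \<Rightarrow> 'k))"
    by (rule tl_null_cap_comp_jn[OF assms(2)])
  have "tl_mirror (cap_I {i} n) = cup_I {i} n"
    by (simp add: cap_I_def cup_I_def tl_mirror_capx)
  then show "tl_null (n - 2) n (tl_lcomp (jn n :: tl_expr \<Rightarrow> 'k) (tl_single (cup_I {i} n)))"
    using tl_null_mirror[OF cap_jn] by (simp add: tl_lcomp_mirror jn_mirror)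
qed

end
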